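(* Let $n \ge 2$ and let $n_1, m_1 \in \mathbb{Z}$ be such that $\mathcal{P}_n(n_1;m_1)$ is a regular presentation of $Q_{4n}$. Then $\mathcal{P}_n(m_1;n_1)$ is a regular presentation of $Q_{4n}$ and $\mathcal{P}_n(n_1;m_1) \simeq_{Q^*} \mathcal{P}_n(m_1;n_1)$. Furthermore, $\mathcal{E}_{n,r} \simeq_{Q^*} \mathcal{E}_{n,1-r}$ for all $r \in \mathbb{Z}$, where $\mathcal{E}_{n,r} := \mathcal{P}_n(2;1-r)$.
   Context: $Q_{4n}$ is identified with $\langle x, y \mid x^n y^{-2}, xyxy^{-1} \rangle$; $\mathcal{P}_n(n_1;m_1) = \langle x, y \mid x^n y^{-2},\ x^{n_1} y x^{m_1} y^{-1} x^{1-n_1} y x^{1-m_1} y^{-1} \rangle$, regular if $x\mapsto x$, $y\mapsto y$ induces an isomorphism of the presented group onto $Q_{4n}$. Two finite presentations on the same generators are $Q^*$-equivalent ($\simeq_{Q^*}$) if related by a finite sequence of the moves: replace a relator $r_i$ by $r_ir_j$ ($j\neq i$); replace $r_i$ by $r_i^{-1}$; replace $r_i$ by $wr_iw^{-1}$ for $w$ in the free group on the generators; replace every relator $r_i$ by $\phi(r_i)$ for an automorphism $\phi$ of the free group on the generators. *)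

theory Defs
  imports Main
begin

datatype gen = GX | GY

text \<open>A letter is a generator with an exponent sign (True = +1, False = -1).
  Elements of the free group F(x,y) are the freely reduced words.\<close>
type_synonym word = "(gen \<times> bool) list"

fun inv_letter :: "gen \<times> bool \<Rightarrow> gen \<times> bool" where
  "inv_letter (g, b) = (g, \<not> b)"

definition inv_word :: "word \<Rightarrow> word" where
  "inv_word w = rev (map inv_letter w)"

fun red_step :: "gen \<times> bool \<Rightarrow> word \<Rightarrow> word" where
  "red_step a [] = [a]"
| "red_step a (b # bs) = (if b = inv_letter a then bs else a # b # bs)"

definition reduce :: "word \<Rightarrow> word" where
  "reduce w = foldr red_step w []"

definition reduced :: "word \<Rightarrow> bool" where
  "reduced w \<longleftrightarrow> reduce w = w"

definition fmult :: "word \<Rightarrow> word \<Rightarrow> word" (infixl "\<cdot>" 70) where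
  "u \<cdot> v = reduce (u @ v)"

definition gx :: word where "gx = [(GX, True)]"
definition gy :: word where "gy = [(GY, True)]"

definition fpow :: "word \<Rightarrow> int \<Rightarrow> word" where
  "fpow w k = reduce (if 0 \<le> k then concat (replicate (nat k) w)
                      else concat (replicate (nat (- k)) (inv_word w)))"

inductive_set ncl :: "word set \<Rightarrow> word set" for R :: "word set" where
  ncl_one: "[] \<in> ncl R"
| ncl_conj: "r \<in> R \<Longrightarrow> reduce (w @ r @ inv_word w) \<in> ncl R"
| ncl_inv: "a \<in> ncl R \<Longrightarrow> inv_word a \<in> ncl R"
| ncl_mult: "a \<in> ncl R \<Longrightarrow> b \<in> ncl R \<Longrightarrow> a \<cdot> b \<in> ncl R"

definition ext_hom :: "(gen \<Rightarrow> word) \<Rightarrow> word \<Rightarrow> word" where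
  "ext_hom f w = reduce (concat (map (\<lambda>(g, b). if b then f g else inv_word (f g)) w))"

definition free_aut :: "(word \<Rightarrow> word) \<Rightarrow> bool" where
  "free_aut \<phi> \<longleftrightarrow> (\<exists>f. \<phi> = ext_hom f \<and> bij_betw \<phi> {w. reduced w} {w. reduced w})"

text \<open>A presentation on generators x, y is given by its (ordered) list of relators.\<close>

definition Q_rels :: "nat \<Rightarrow> word list" where
  "Q_rels n = [fpow gx (int n) \<cdot> fpow gy (-2), gx \<cdot> gy \<cdot> gx \<cdot> fpow gy (-1)]"

definition P_rels :: "nat \<Rightarrow> int \<Rightarrow> int \<Rightarrow> word list" where
  "P_rels n n1 m1 = [fpow gx (int n) \<cdot> fpow gy (-2),
     fpow gx n1 \<cdot> gy \<cdot> fpow gx m1 \<cdot> fpow gy (-1) \<cdot> fpow gx (1 - n1) \<cdot> gy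
       \<cdot> fpow gx (1 - m1) \<cdot> fpow gy (-1)]"

definition E_rels :: "nat \<Rightarrow> int \<Rightarrow> word list" where
  "E_rels n r = P_rels n 2 (1 - r)"

text \<open>Regularity: x \<mapsto> x, y \<mapsto> y induces an isomorphism F/N(P) \<rightarrow> F/N(Q_{4n}),
  i.e. the two normal closures coincide.\<close>
definition regular :: "nat \<Rightarrow> int \<Rightarrow> int \<Rightarrow> bool" where
  "regular n n1 m1 \<longleftrightarrow> ncl (set (P_rels n n1 m1)) = ncl (set (Q_rels n))"

inductive qmove :: "word list \<Rightarrow> word list \<Rightarrow> bool" where
  qm_mult: "i < length rs \<Longrightarrow> j < length rs \<Longrightarrow> i \<noteq> j \<Longrightarrow>
     qmove rs (rs[i := (rs ! i) \<cdot> (rs ! j)])"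
| qm_inv: "i < length rs \<Longrightarrow> qmove rs (rs[i := inv_word (rs ! i)])"
| qm_conj: "i < length rs \<Longrightarrow> qmove rs (rs[i := w \<cdot> (rs ! i) \<cdot> inv_word w])"
| qm_aut: "free_aut \<phi> \<Longrightarrow> qmove rs (map \<phi> rs)"

definition Qstar_equiv :: "word list \<Rightarrow> word list \<Rightarrow> bool" where
  "Qstar_equiv P Q \<longleftrightarrow> (sup qmove qmove\<inverse>\<inverse>)\<^sup>*\<^sup>* (map reduce P) (map reduce Q)"

end

theory Submission
  imports Defs
begin

(* Two involutive automorphisms of F(x,y) do all the work: sigma (inv_xy below), inverting
   both generators, and tau (shear below), sending x to x^-1 and y to y x^-n. In any group,
   sigma turns x^n y^-2 and x y x y^-1 into conjugates of their inverses and the second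
   relator of P_n(n1;m1) into a conjugate of the inverse of the second relator of P_n(m1;n1);
   tau turns x^n y^-2 into a conjugate of itself and the second relator of P_n(n1;m1) into a
   conjugate of the inverse of that of P_n(n1;1-m1). One automorphism move followed by
   inverting and conjugating single relators therefore gives both Q*-equivalences, the second
   one for E_{n,r} = P_n(2;1-r). Moreover sigma maps N(Q_4n) into itself and N(P_n(n1;m1))
   into N(P_n(m1;n1)); being an involution, it transports N(P_n(n1;m1)) = N(Q_4n) to
   N(P_n(m1;n1)) = N(Q_4n). *)

section \<open>Free reduction\<close>

lemma inv_letter_inv_letter [simp]: "inv_letter (inv_letter a) = a"
  by (cases a) simp

lemma inv_letter_eq_iff: "inv_letter a = b \<longleftrightarrow> a = inv_letter b"
  by (cases a; cases b) auto

lemma reduce_Nil [simp]: "reduce [] = []"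
  by (simp add: reduce_def)

lemma reduce_Cons: "reduce (a # w) = red_step a (reduce w)"
  by (simp add: reduce_def)

fun no_cancellation :: "word \<Rightarrow> bool" where
  "no_cancellation (a # b # w) \<longleftrightarrow> b \<noteq> inv_letter a \<and> no_cancellation (b # w)"
| "no_cancellation _ \<longleftrightarrow> True"

lemma no_cancellation_tl: "no_cancellation (a # w) \<Longrightarrow> no_cancellation w"
  by (cases w) auto

lemma no_cancellation_red_step: "no_cancellation w \<Longrightarrow> no_cancellation (red_step a w)"
  by (cases w) (auto dest: no_cancellation_tl)

lemma no_cancellation_reduce: "no_cancellation (reduce w)"
  by (induction w) (auto simp: reduce_Cons no_cancellation_red_step)

lemma reduce_no_cancellation: "no_cancellation w \<Longrightarrow> reduce w = w"
  by (induction w rule: no_cancellation.induct) (auto simp: reduce_Cons)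

lemma reduced_iff_no_cancellation: "reduced w \<longleftrightarrow> no_cancellation w"
  unfolding reduced_def by (metis no_cancellation_reduce reduce_no_cancellation)

lemma reduce_reduce [simp]: "reduce (reduce w) = reduce w"
  by (simp add: no_cancellation_reduce reduce_no_cancellation)

lemma red_step_inv_letter_red_step:
  assumes "no_cancellation w"
  shows "red_step (inv_letter a) (red_step a w) = w"
proof (cases w)
  case (Cons b bs)
  with assms show ?thesis
    by (cases "b = inv_letter a"; cases bs) (auto simp: inv_letter_eq_iff)
qed simp

lemma reduce_red_step_append:
  assumes "no_cancellation w"
  shows "reduce (red_step a w @ v) = red_step a (reduce (w @ v))"
proof (cases w)
  case (Cons b bs)
  show ?thesis
  proof (cases "b = inv_letter a")
    case True
    then have "red_step a (red_step b (reduce (bs @ v))) = reduce (bs @ v)"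
      using red_step_inv_letter_red_step[OF no_cancellation_reduce, of "inv_letter a"] by simp
    with Cons True show ?thesis
      by (simp add: reduce_Cons)
  qed (use Cons in \<open>simp add: reduce_Cons\<close>)
qed (simp add: reduce_Cons)

lemma reduce_reduce_append [simp]: "reduce (reduce u @ v) = reduce (u @ v)"
  by (induction u) (simp_all add: reduce_Cons reduce_red_step_append no_cancellation_reduce)

lemma reduce_append: "reduce (u @ v) = foldr red_step u (reduce v)"
  by (simp add: reduce_def)

lemma reduce_append_reduce [simp]: "reduce (u @ reduce v) = reduce (u @ v)"
  by (simp only: reduce_append reduce_reduce)

lemma inv_word_Nil [simp]: "inv_word [] = []"
  by (simp add: inv_word_def)

lemma inv_word_Cons [simp]: "inv_word (a # w) = inv_word w @ [inv_letter a]"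
  by (simp add: inv_word_def)

lemma inv_word_inv_word [simp]: "inv_word (inv_word w) = w"
  by (simp add: inv_word_def rev_map comp_def)

lemma reduce_append_inv_word [simp]: "reduce (w @ inv_word w) = []"
proof (induction w)
  case (Cons a w)
  have "reduce (w @ inv_word w @ [inv_letter a]) = [inv_letter a]"
    using reduce_reduce_append[of "w @ inv_word w" "[inv_letter a]"] Cons
    by (simp add: reduce_Cons)
  then show ?case
    by (simp add: reduce_Cons)
qed simp

lemma reduce_inv_word_append [simp]: "reduce (inv_word w @ w) = []"
  using reduce_append_inv_word[of "inv_word w"] by simp

lemma no_cancellation_append_single:
  "no_cancellation (w @ [a]) \<longleftrightarrow> no_cancellation w \<and> (w = [] \<or> a \<noteq> inv_letter (last w))"
  by (induction w rule: no_cancellation.induct) auto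

lemma no_cancellation_inv_word: "no_cancellation w \<Longrightarrow> no_cancellation (inv_word w)"
proof (induction w rule: no_cancellation.induct)
  case (1 a b w)
  then show ?case
    by (simp only: inv_word_Cons no_cancellation_append_single)
      (auto simp: inv_word_def last_rev last_map inv_letter_eq_iff)
qed auto

lemma reduce_inv_word: "reduce (inv_word w) = inv_word (reduce w)"
proof -
  let ?r = "reduce w"
  have "reduce (inv_word w) = reduce (inv_word w @ reduce (?r @ inv_word ?r))"
    by simp
  also have "\<dots> = reduce (reduce (inv_word w @ ?r) @ inv_word ?r)"
    by (simp only: reduce_append_reduce reduce_reduce_append append_assoc)
  also have "reduce (inv_word w @ ?r) = []"
    by simp
  finally show ?thesis
    by (simp add: reduce_no_cancellation no_cancellation_inv_word no_cancellation_reduce)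
qed

section \<open>Integer multiples and relators in a group\<close>

(* In a noncommutative group the normal form a + - b must not be folded into a - b, which
   would hide the inverse from the rewriting below. *)
declare add_uminus_conv_diff [simp del]

definition zpow :: "'a :: group_add \<Rightarrow> int \<Rightarrow> 'a" where
  "zpow g k = (if 0 \<le> k then sum_list (replicate (nat k) g)
               else sum_list (replicate (nat (- k)) (- g)))"

lemma zpow_0 [simp]: "zpow g 0 = 0"
  by (simp add: zpow_def)

lemma zpow_neg_1 [simp]: "zpow g (- 1) = - g"
  by (simp add: zpow_def)

lemma zpow_succ: "zpow g (k + 1) = g + zpow g k"
proof (cases "0 \<le> k")
  case True
  then have "nat (k + 1) = Suc (nat k)"
    by simp
  with True show ?thesis
    by (simp add: zpow_def)
next
  case False
  then have "nat (- k) = Suc (nat (- (k + 1)))"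
    by simp
  with False show ?thesis
    by (auto simp add: zpow_def add.assoc[symmetric])
qed

lemma zpow_pred: "zpow g (k - 1) = - g + zpow g k"
  using zpow_succ[of g "k - 1"] by (simp add: add.assoc[symmetric])

lemma zpow_add: "zpow g a + zpow g b = zpow g (a + b)"
proof (induction a rule: int_induct[where k = 0])
  case (step1 i)
  then show ?case
    using zpow_succ[of g i] zpow_succ[of g "i + b"] by (simp add: add.assoc algebra_simps)
next
  case (step2 i)
  then show ?case
    using zpow_pred[of g i] zpow_pred[of g "i + b"] by (simp add: add.assoc algebra_simps)
qed simp

lemma zpow_uminus: "- zpow g k = zpow g (- k)"
  by (rule minus_unique) (simp add: zpow_add)

lemma zpow_uminus_base: "zpow (- g) k = zpow g (- k)"
  by (cases "k = 0") (simp_all add: zpow_def)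

locale group_add_hom =
  fixes h :: "'a :: group_add \<Rightarrow> 'b :: group_add"
  assumes hom_add: "h (a + b) = h a + h b"
begin

lemma hom_zero [simp]: "h 0 = 0"
  using hom_add[of 0 0] by (metis add.right_neutral add_left_cancel)

lemma hom_uminus [simp]: "h (- a) = - h a"
  using hom_add[of a "- a"] by (simp add: minus_unique)

lemma hom_sum_list: "h (sum_list xs) = sum_list (map h xs)"
  by (induction xs) (simp_all add: hom_add)

lemma hom_zpow [simp]: "h (zpow g k) = zpow (h g) k"
  by (simp add: zpow_def hom_sum_list)

end

lemma group_add_hom_id: "group_add_hom (\<lambda>a. a)"
  by standard (rule refl)

lemma group_add_hom_comp: "group_add_hom f \<Longrightarrow> group_add_hom g \<Longrightarrow> group_add_hom (f \<circ> g)"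
  by (simp add: group_add_hom_def)

lemma zpow_neg_2: "zpow g (- 2) = - g + - g"
  using zpow_add[of g "- 1" "- 1"] by simp

definition power_rel :: "nat \<Rightarrow> 'a :: group_add \<Rightarrow> 'a \<Rightarrow> 'a" where
  "power_rel n x y = zpow x (int n) + - y + - y"

definition quat_rel :: "'a :: group_add \<Rightarrow> 'a \<Rightarrow> 'a" where
  "quat_rel x y = x + y + x + - y"

definition P_rel :: "int \<Rightarrow> int \<Rightarrow> 'a :: group_add \<Rightarrow> 'a \<Rightarrow> 'a" where
  "P_rel a b x y = zpow x a + y + zpow x b + - y + zpow x (1 - a) + y + zpow x (1 - b) + - y"

lemma zpow_add_left: "zpow g a + (zpow g b + c) = zpow g (a + b) + c"
  by (simp add: zpow_add add.assoc[symmetric])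

lemmas group_normalize =
  add.assoc minus_add minus_minus zpow_uminus zpow_uminus_base zpow_add zpow_add_left

lemma power_rel_inv_inv:
  "power_rel n (- x) (- y) = (- y + - y) + - power_rel n x y + - (- y + - y)"
  by (simp add: power_rel_def group_normalize)

lemma quat_rel_inv_inv: "quat_rel (- x) (- y) = - y + - quat_rel x y + - (- y)"
  by (simp add: quat_rel_def group_normalize)

lemma P_rel_inv_inv:
  "P_rel a b (- x) (- y) = c + - P_rel b a x y + - c"
  if "c = - (zpow x b + y + zpow x a)"
  using that by (simp add: P_rel_def group_normalize)

lemma power_rel_shear:
  "power_rel n (- x) (y + zpow x (- int n)) = - y + power_rel n x y + - (- y)"
  by (simp add: power_rel_def group_normalize)

lemma P_rel_shear:
  "P_rel a b (- x) (y + zpow x k) = - zpow x a + - P_rel a (1 - b) x y + - (- zpow x a)"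
  by (simp add: P_rel_def group_normalize) (simp add: add_uminus_conv_diff)

context group_add_hom
begin

lemma hom_power_rel [simp]: "h (power_rel n x y) = power_rel n (h x) (h y)"
  by (simp add: power_rel_def hom_add)

lemma hom_quat_rel [simp]: "h (quat_rel x y) = quat_rel (h x) (h y)"
  by (simp add: quat_rel_def hom_add)

lemma hom_P_rel [simp]: "h (P_rel a b x y) = P_rel a b (h x) (h y)"
  by (simp add: P_rel_def hom_add)

end

section \<open>The free group on x and y\<close>

(* F(x,y) as the type of reduced words, written additively: group_add does not assume
   commutativity. *)

typedef fg = "{w. reduced w}" morphisms rep abs_fg
  by (rule exI[of _ "[]"]) (simp add: reduced_def)

definition fg_of :: "word \<Rightarrow> fg" where
  "fg_of w = abs_fg (reduce w)"

lemma no_cancellation_rep: "no_cancellation (rep g)"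
  using rep[of g] by (simp add: reduced_iff_no_cancellation)

lemma reduce_rep [simp]: "reduce (rep g) = rep g"
  by (simp add: no_cancellation_rep reduce_no_cancellation)

lemma rep_fg_of [simp]: "rep (fg_of w) = reduce w"
  by (simp add: fg_of_def abs_fg_inverse reduced_def)

lemma fg_of_rep [simp]: "fg_of (rep g) = g"
  by (simp add: fg_of_def rep_inverse)

lemma fg_of_eq_iff: "fg_of u = fg_of v \<longleftrightarrow> reduce u = reduce v"
  by (metis rep_fg_of fg_of_def)

instantiation fg :: group_add
begin

definition "0 = fg_of []"
definition "a + b = fg_of (rep a @ rep b)"
definition "- a = fg_of (inv_word (rep a))"
definition "a - b = a + - (b :: fg)"

instance
proof
  fix a b c :: fg
  show "a + b + c = a + (b + c)"
    by (simp add: plus_fg_def fg_of_eq_iff)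
  show "0 + a = a" "a + 0 = a"
    by (simp_all add: plus_fg_def zero_fg_def)
  show "- a + a = 0"
    by (simp add: plus_fg_def uminus_fg_def zero_fg_def fg_of_eq_iff)
  show "a + - b = a - b"
    by (simp add: minus_fg_def)
qed

end

lemma rep_plus: "rep (a + b) = reduce (rep a @ rep b)"
  by (simp add: plus_fg_def)

lemma fmult_rep: "rep a \<cdot> rep b = rep (a + b)"
  by (simp add: fmult_def rep_plus)

lemma inv_word_rep: "inv_word (rep a) = rep (- a)"
  by (simp add: uminus_fg_def reduce_inv_word)

lemma fg_of_Nil [simp]: "fg_of [] = 0"
  by (simp add: zero_fg_def)

lemma fg_of_append [simp]: "fg_of (u @ v) = fg_of u + fg_of v"
  by (simp add: plus_fg_def fg_of_eq_iff)

lemma fg_of_inv_word [simp]: "fg_of (inv_word w) = - fg_of w"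
  by (simp add: uminus_fg_def fg_of_eq_iff reduce_inv_word)

lemma fg_of_reduce [simp]: "fg_of (reduce w) = fg_of w"
  by (simp add: fg_of_eq_iff)

lemma fg_of_concat: "fg_of (concat ws) = sum_list (map fg_of ws)"
  by (induction ws) simp_all

definition gen_fg :: "gen \<Rightarrow> fg" where
  "gen_fg x = fg_of [(x, True)]"

abbreviation X :: fg where "X \<equiv> gen_fg GX"
abbreviation Y :: fg where "Y \<equiv> gen_fg GY"

lemma fg_of_letter: "fg_of [(x, b)] = (if b then gen_fg x else - gen_fg x)"
  using fg_of_inv_word[of "[(x, True)]"] by (auto simp: gen_fg_def)

lemma gx_eq: "gx = rep X" and gy_eq: "gy = rep Y"
  by (simp_all add: gx_def gy_def gen_fg_def reduce_Cons)

lemma fpow_eq: "fpow w k = rep (zpow (fg_of w) k)"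
  by (simp add: fpow_def zpow_def fg_of_concat flip: rep_fg_of)

lemma P_rels_eq: "P_rels n a b = map rep [power_rel n X Y, P_rel a b X Y]"
  by (simp add: P_rels_def power_rel_def P_rel_def fpow_eq gx_eq gy_eq fmult_rep zpow_neg_2
      add.assoc)

lemma Q_rels_eq: "Q_rels n = map rep [power_rel n X Y, quat_rel X Y]"
  by (simp add: Q_rels_def power_rel_def quat_rel_def fpow_eq gx_eq gy_eq fmult_rep zpow_neg_2
      add.assoc)

definition eval_letter :: "(gen \<Rightarrow> 'a :: group_add) \<Rightarrow> gen \<times> bool \<Rightarrow> 'a" where
  "eval_letter f = (\<lambda>(x, b). if b then f x else - f x)"

definition eval_word :: "(gen \<Rightarrow> 'a :: group_add) \<Rightarrow> word \<Rightarrow> 'a" where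
  "eval_word f w = sum_list (map (eval_letter f) w)"

lemma eval_word_Nil [simp]: "eval_word f [] = 0"
  by (simp add: eval_word_def)

lemma eval_word_Cons [simp]: "eval_word f (a # w) = eval_letter f a + eval_word f w"
  by (simp add: eval_word_def)

lemma eval_word_append [simp]: "eval_word f (u @ v) = eval_word f u + eval_word f v"
  by (simp add: eval_word_def)

lemma eval_letter_inv_letter: "eval_letter f (inv_letter a) = - eval_letter f a"
  by (cases a) (simp add: eval_letter_def)

lemma eval_word_red_step: "eval_word f (red_step a w) = eval_letter f a + eval_word f w"
proof (cases w)
  case (Cons b bs)
  then show ?thesis
    by (auto simp: eval_letter_inv_letter add.assoc[symmetric])
qed (simp add: eval_word_def)

lemma eval_word_reduce [simp]: "eval_word f (reduce w) = eval_word f w"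
  by (induction w) (simp_all add: reduce_Cons eval_word_red_step)

definition fg_lift :: "(gen \<Rightarrow> 'a :: group_add) \<Rightarrow> fg \<Rightarrow> 'a" where
  "fg_lift f g = eval_word f (rep g)"

lemma fg_lift_fg_of [simp]: "fg_lift f (fg_of w) = eval_word f w"
  by (simp add: fg_lift_def)

lemma fg_lift_gen [simp]: "fg_lift f (gen_fg x) = f x"
  by (simp add: gen_fg_def eval_letter_def)

lemma group_add_hom_fg_lift: "group_add_hom (fg_lift f)"
proof
  fix a b :: fg
  show "fg_lift f (a + b) = fg_lift f a + fg_lift f b"
    by (simp add: fg_lift_def rep_plus)
qed

lemma fg_lift_unique:
  assumes "group_add_hom h"
  shows "fg_lift (h \<circ> gen_fg) g = h g"
proof -
  interpret group_add_hom h by fact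
  have "h (fg_of w) = eval_word (h \<circ> gen_fg) w" for w
  proof (induction w)
    case (Cons a w)
    have "h (fg_of (a # w)) = h (fg_of [a]) + h (fg_of w)"
      using fg_of_append[of "[a]" w] by (simp add: hom_add)
    with Cons show ?case
      by (cases a) (simp add: fg_of_letter eval_letter_def)
  qed simp
  then show ?thesis
    by (metis fg_lift_fg_of fg_of_rep)
qed

lemma group_add_hom_eqI:
  assumes "group_add_hom h1" "group_add_hom h2" "\<And>x. h1 (gen_fg x) = h2 (gen_fg x)"
  shows "h1 g = h2 (g :: fg)"
proof -
  have "h1 \<circ> gen_fg = h2 \<circ> gen_fg"
    using assms(3) by auto
  then show ?thesis
    using fg_lift_unique[OF assms(1), of g] fg_lift_unique[OF assms(2), of g] by simp
qed

lemma fg_hom_involution: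
  assumes "group_add_hom h" "\<And>z. h (h (gen_fg z)) = gen_fg z"
  shows "h (h g) = g"
  using group_add_hom_eqI[OF group_add_hom_comp[OF assms(1) assms(1)] group_add_hom_id] assms(2)
  by simp

lemma ext_hom_eq: "ext_hom (rep \<circ> f) w = rep (fg_lift f (fg_of w))"
proof -
  have "fg_of (ext_hom (rep \<circ> f) w) = eval_word f w"
    by (induction w) (auto simp: ext_hom_def eval_letter_def)
  moreover have "rep (fg_of (ext_hom (rep \<circ> f) w)) = ext_hom (rep \<circ> f) w"
    by (simp add: ext_hom_def)
  ultimately show ?thesis
    by simp
qed

lemma free_aut_ext_hom:
  assumes "bij (fg_lift f)"
  shows "free_aut (ext_hom (rep \<circ> f))"
  unfolding free_aut_def
proof (intro exI conjI)
  let ?g = "rep \<circ> inv (fg_lift f) \<circ> fg_of"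
  show "bij_betw (ext_hom (rep \<circ> f)) {w. reduced w} {w. reduced w}"
  proof (rule bij_betw_byWitness[where f' = ?g])
    show "\<forall>w \<in> {w. reduced w}. ?g (ext_hom (rep \<circ> f) w) = w"
      using bij_is_inj[OF assms] by (simp add: ext_hom_eq reduced_def inv_f_f del: fg_lift_fg_of)
    show "\<forall>w \<in> {w. reduced w}. ext_hom (rep \<circ> f) (?g w) = w"
      using bij_is_surj[OF assms]
      by (simp add: ext_hom_eq reduced_def surj_f_inv_f del: fg_lift_fg_of)
  qed (auto simp: ext_hom_eq reduced_def)
qed simp

definition fg_ncl :: "word set \<Rightarrow> fg set" where
  "fg_ncl R = fg_of ` ncl R"

lemma reduce_ncl: "x \<in> ncl R \<Longrightarrow> reduce x = x"
  by (induction rule: ncl.induct) (simp_all add: reduce_inv_word fmult_def)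

lemma ncl_eq_rep_image: "ncl R = rep ` fg_ncl R"
proof -
  have "rep ` fg_ncl R = reduce ` ncl R"
    by (simp add: fg_ncl_def image_image)
  also have "\<dots> = ncl R"
    by (simp add: reduce_ncl cong: image_cong)
  finally show ?thesis ..
qed

lemma ncl_eq_iff_fg_ncl_eq: "ncl A = ncl B \<longleftrightarrow> fg_ncl A = fg_ncl B"
  by (metis ncl_eq_rep_image fg_ncl_def)

lemma fg_of_fmult [simp]: "fg_of (u \<cdot> v) = fg_of u + fg_of v"
  by (simp add: fmult_def)

lemma fg_ncl_zero: "0 \<in> fg_ncl R"
  unfolding fg_ncl_def using ncl.ncl_one by (rule rev_image_eqI) simp

lemma fg_ncl_add: "a \<in> fg_ncl R \<Longrightarrow> b \<in> fg_ncl R \<Longrightarrow> a + b \<in> fg_ncl R"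
  unfolding fg_ncl_def by (auto intro: rev_image_eqI[OF ncl.ncl_mult])

lemma fg_ncl_uminus: "a \<in> fg_ncl R \<Longrightarrow> - a \<in> fg_ncl R"
  unfolding fg_ncl_def by (auto intro: rev_image_eqI[OF ncl.ncl_inv])

(* Carrying an arbitrary conjugator c through the induction gives normality of fg_ncl R
   (h the identity) and invariance under homomorphisms (c = 0) in one go. *)
lemma fg_ncl_conj_hom_image:
  assumes "group_add_hom h"
    and rel: "\<And>r c. r \<in> R \<Longrightarrow> c + h (fg_of r) + - c \<in> fg_ncl T"
    and "g \<in> fg_ncl R"
  shows "c + h g + - c \<in> fg_ncl T"
proof -
  interpret group_add_hom h by fact
  have "c + h (fg_of x) + - c \<in> fg_ncl T" if "x \<in> ncl R" for x c
    using that
  proof (induction arbitrary: c rule: ncl.induct)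
    case ncl_one
    show ?case
      by (simp add: fg_ncl_zero)
  next
    case (ncl_conj r w)
    have "c + h (fg_of (reduce (w @ r @ inv_word w))) + - c
          = (c + h (fg_of w)) + h (fg_of r) + - (c + h (fg_of w))"
      by (simp add: hom_add add.assoc minus_add)
    also have "\<dots> \<in> fg_ncl T"
      using ncl_conj.hyps by (rule rel)
    finally show ?case .
  next
    case (ncl_inv a)
    have "c + h (fg_of (inv_word a)) + - c = - (c + h (fg_of a) + - c)"
      by (simp add: add.assoc minus_add)
    with ncl_inv.IH show ?case
      by (simp add: fg_ncl_uminus)
  next
    case (ncl_mult a b)
    have "c + h (fg_of (a \<cdot> b)) + - c = (c + h (fg_of a) + - c) + (c + h (fg_of b) + - c)"
      by (simp add: hom_add add.assoc)
    with ncl_mult.IH show ?case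
      by (simp add: fg_ncl_add)
  qed
  with \<open>g \<in> fg_ncl R\<close> show ?thesis
    by (auto simp: fg_ncl_def)
qed

lemma fg_ncl_conj: "g \<in> fg_ncl R \<Longrightarrow> c + g + - c \<in> fg_ncl R"
proof (rule fg_ncl_conj_hom_image[where h = "\<lambda>a. a"])
  show "group_add_hom (\<lambda>a :: fg. a)"
    by (rule group_add_hom_id)
  show "c + fg_of r + - c \<in> fg_ncl R" if "r \<in> R" for r c
    using ncl.ncl_conj[OF that, of "rep c"] unfolding fg_ncl_def
    by (rule rev_image_eqI) (simp add: add.assoc)
qed

lemma fg_ncl_conj_uminus: "g \<in> fg_ncl R \<Longrightarrow> c + - g + - c \<in> fg_ncl R"
  by (intro fg_ncl_conj fg_ncl_uminus)

lemma fg_ncl_hom_image: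
  assumes "group_add_hom h" "\<And>r. r \<in> R \<Longrightarrow> h (fg_of r) \<in> fg_ncl T" "g \<in> fg_ncl R"
  shows "h g \<in> fg_ncl T"
  using fg_ncl_conj_hom_image[OF assms(1) _ assms(3), of T 0] assms(2) fg_ncl_conj by simp

lemma rep_in_fg_ncl:
  assumes "rep g \<in> R"
  shows "g \<in> fg_ncl R"
proof -
  have "rep g \<in> ncl R"
    using ncl.ncl_conj[OF assms, of "[]"] by simp
  then show ?thesis
    unfolding fg_ncl_def by (rule rev_image_eqI) simp
qed

lemma Qstar_equiv_trans [trans]:
  "Qstar_equiv P Q \<Longrightarrow> Qstar_equiv Q S \<Longrightarrow> Qstar_equiv P S"
  unfolding Qstar_equiv_def by (rule rtranclp_trans)

lemma Qstar_equiv_qmove: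
  "qmove (map rep gs) (map rep gs') \<Longrightarrow> Qstar_equiv (map rep gs) (map rep gs')"
  using r_into_rtranclp[of "sup qmove qmove\<inverse>\<inverse>"] by (simp add: Qstar_equiv_def comp_def)

lemma Qstar_equiv_aut:
  assumes "bij (fg_lift f)"
  shows "Qstar_equiv (map rep gs) (map rep (map (fg_lift f) gs))"
proof (rule Qstar_equiv_qmove)
  have "map rep (map (fg_lift f) gs) = map (ext_hom (rep \<circ> f)) (map rep gs)"
    by (simp add: ext_hom_eq)
  then show "qmove (map rep gs) (map rep (map (fg_lift f) gs))"
    using qm_aut[OF free_aut_ext_hom[OF assms], of "map rep gs"] by (simp only:)
qed

lemma Qstar_equiv_conj:
  assumes "i < length gs" "gs ! i = c + g + - c" "gs' = gs[i := g]"
  shows "Qstar_equiv (map rep gs) (map rep gs')"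
  unfolding \<open>gs' = gs[i := g]\<close>
proof (rule Qstar_equiv_qmove)
  have "g = - c + gs ! i + - (- c)"
    using assms(2) by (simp add: add.assoc)
  then show "qmove (map rep gs) (map rep (gs[i := g]))"
    using qm_conj[of i "map rep gs" "rep (- c)"] assms(1)
    by (simp add: map_update fmult_rep inv_word_rep)
qed

lemma Qstar_equiv_conj_inv:
  assumes "i < length gs" "gs ! i = c + - g + - c" "gs' = gs[i := g]"
  shows "Qstar_equiv (map rep gs) (map rep gs')"
proof -
  have "Qstar_equiv (map rep gs) (map rep (gs[i := - (gs ! i)]))"
  proof (rule Qstar_equiv_qmove)
    show "qmove (map rep gs) (map rep (gs[i := - (gs ! i)]))"
      using qm_inv[of i "map rep gs"] assms(1) by (simp add: map_update inv_word_rep)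
  qed
  also have "Qstar_equiv \<dots> (map rep gs')"
  proof (rule Qstar_equiv_conj[where c = c and g = g])
    show "i < length (gs[i := - (gs ! i)])"
      using assms(1) by simp
    show "gs[i := - (gs ! i)] ! i = c + g + - c"
      using assms(1,2) by (simp add: minus_add add.assoc)
    show "gs' = (gs[i := - (gs ! i)])[i := g]"
      using assms(3) by simp
  qed
  finally show ?thesis .
qed

section \<open>The automorphisms sigma and tau\<close>

definition inv_xy :: "fg \<Rightarrow> fg" where
  "inv_xy = fg_lift (\<lambda>z. - gen_fg z)"

definition shear :: "int \<Rightarrow> fg \<Rightarrow> fg" where
  "shear k = fg_lift (\<lambda>z. case z of GX \<Rightarrow> - X | GY \<Rightarrow> Y + zpow X k)"

lemma group_add_hom_inv_xy: "group_add_hom inv_xy"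
  by (simp add: inv_xy_def group_add_hom_fg_lift)

lemma group_add_hom_shear: "group_add_hom (shear k)"
  by (simp add: shear_def group_add_hom_fg_lift)

lemma inv_xy_gen [simp]: "inv_xy (gen_fg z) = - gen_fg z"
  by (simp add: inv_xy_def)

lemma shear_X [simp]: "shear k X = - X"
  and shear_Y [simp]: "shear k Y = Y + zpow X k"
  by (simp_all add: shear_def)

lemma inv_xy_inv_xy: "inv_xy (inv_xy g) = g"
  using group_add_hom_inv_xy
  by (rule fg_hom_involution) (simp add: group_add_hom.hom_uminus[OF group_add_hom_inv_xy])

lemma shear_shear: "shear k (shear k g) = g"
proof (rule fg_hom_involution[OF group_add_hom_shear])
  interpret group_add_hom "shear k"
    by (rule group_add_hom_shear)
  show "shear k (shear k (gen_fg z)) = gen_fg z" for z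
    by (cases z) (simp_all add: hom_add zpow_uminus_base zpow_add add.assoc)
qed

lemma bij_inv_xy: "bij inv_xy"
  using inv_xy_inv_xy by (rule involuntory_imp_bij)

lemma bij_shear: "bij (shear k)"
  using shear_shear by (rule involuntory_imp_bij)

lemma Qstar_equiv_P_rels_swap: "Qstar_equiv (P_rels n a b) (P_rels n b a)"
proof -
  interpret group_add_hom inv_xy
    by (rule group_add_hom_inv_xy)
  have "Qstar_equiv (P_rels n a b) (map rep (map inv_xy [power_rel n X Y, P_rel a b X Y]))"
    unfolding P_rels_eq inv_xy_def
    using bij_inv_xy[unfolded inv_xy_def] by (rule Qstar_equiv_aut)
  also have "\<dots> = map rep [power_rel n (- X) (- Y), P_rel a b (- X) (- Y)]"
    by simp
  also have "Qstar_equiv \<dots> (map rep [power_rel n X Y, P_rel a b (- X) (- Y)])"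
    by (rule Qstar_equiv_conj_inv[where i = 0 and c = "- Y + - Y" and g = "power_rel n X Y"])
      (simp_all add: power_rel_inv_inv)
  also have "Qstar_equiv \<dots> (map rep [power_rel n X Y, P_rel b a X Y])"
    by (rule Qstar_equiv_conj_inv[where i = 1 and c = "- (zpow X b + Y + zpow X a)"
          and g = "P_rel b a X Y"])
      (simp_all add: P_rel_inv_inv)
  finally show ?thesis
    by (simp add: P_rels_eq)
qed

lemma Qstar_equiv_P_rels_flip: "Qstar_equiv (P_rels n a b) (P_rels n a (1 - b))"
proof -
  let ?s = "shear (- int n)"
  interpret group_add_hom ?s
    by (rule group_add_hom_shear)
  have "Qstar_equiv (P_rels n a b) (map rep (map ?s [power_rel n X Y, P_rel a b X Y]))"
    unfolding P_rels_eq shear_def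
    using bij_shear[unfolded shear_def] by (rule Qstar_equiv_aut)
  also have "\<dots> = map rep [power_rel n (- X) (Y + zpow X (- int n)),
                             P_rel a b (- X) (Y + zpow X (- int n))]"
    by simp
  also have "Qstar_equiv \<dots> (map rep [power_rel n X Y, P_rel a b (- X) (Y + zpow X (- int n))])"
    by (rule Qstar_equiv_conj[where i = 0 and c = "- Y" and g = "power_rel n X Y"])
      (simp_all add: power_rel_shear)
  also have "Qstar_equiv \<dots> (map rep [power_rel n X Y, P_rel a (1 - b) X Y])"
    by (rule Qstar_equiv_conj_inv[where i = 1 and c = "- zpow X a"
          and g = "P_rel a (1 - b) X Y"])
      (simp_all add: P_rel_shear)
  finally show ?thesis
    by (simp add: P_rels_eq)
qed

lemma inv_xy_fg_ncl_Q_rels: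
  "g \<in> fg_ncl (set (Q_rels n)) \<Longrightarrow> inv_xy g \<in> fg_ncl (set (Q_rels n))"
proof (rule fg_ncl_hom_image[OF group_add_hom_inv_xy])
  interpret group_add_hom inv_xy
    by (rule group_add_hom_inv_xy)
  fix r assume "r \<in> set (Q_rels n)"
  moreover have "power_rel n X Y \<in> fg_ncl (set (Q_rels n))"
    "quat_rel X Y \<in> fg_ncl (set (Q_rels n))"
    by (simp_all add: Q_rels_eq rep_in_fg_ncl)
  ultimately show "inv_xy (fg_of r) \<in> fg_ncl (set (Q_rels n))"
    by (auto simp: Q_rels_eq power_rel_inv_inv quat_rel_inv_inv simp del: minus_minus
        intro: fg_ncl_conj_uminus)
qed

lemma inv_xy_fg_ncl_P_rels:
  "g \<in> fg_ncl (set (P_rels n a b)) \<Longrightarrow> inv_xy g \<in> fg_ncl (set (P_rels n b a))"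
proof (rule fg_ncl_hom_image[OF group_add_hom_inv_xy])
  interpret group_add_hom inv_xy
    by (rule group_add_hom_inv_xy)
  fix r assume "r \<in> set (P_rels n a b)"
  moreover have "power_rel n X Y \<in> fg_ncl (set (P_rels n b a))"
    "P_rel b a X Y \<in> fg_ncl (set (P_rels n b a))"
    by (simp_all add: P_rels_eq rep_in_fg_ncl)
  ultimately show "inv_xy (fg_of r) \<in> fg_ncl (set (P_rels n b a))"
    by (auto simp: P_rels_eq power_rel_inv_inv P_rel_inv_inv simp del: minus_minus
        intro: fg_ncl_conj_uminus)
qed

lemma regular_swap:
  assumes "regular n a b"
  shows "regular n b a"
proof -
  let ?N = "fg_ncl (set (Q_rels n))"
  have N: "fg_ncl (set (P_rels n a b)) = ?N"
    using assms by (simp add: regular_def ncl_eq_iff_fg_ncl_eq)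
  have "fg_ncl (set (P_rels n b a)) = ?N"
  proof (intro equalityI subsetI)
    fix g assume "g \<in> fg_ncl (set (P_rels n b a))"
    then have "inv_xy g \<in> ?N"
      using inv_xy_fg_ncl_P_rels N by blast
    then show "g \<in> ?N"
      using inv_xy_fg_ncl_Q_rels inv_xy_inv_xy by metis
  next
    fix g assume "g \<in> ?N"
    then have "inv_xy g \<in> fg_ncl (set (P_rels n a b))"
      using inv_xy_fg_ncl_Q_rels N by blast
    then show "g \<in> fg_ncl (set (P_rels n b a))"
      using inv_xy_fg_ncl_P_rels inv_xy_inv_xy by metis
  qed
  then show ?thesis
    by (simp add: regular_def ncl_eq_iff_fg_ncl_eq)
qed

theorem proposition3p22:
  fixes n :: nat
  assumes "n \<ge> 2"
  shows "(\<forall>n1 m1 :: int. regular n n1 m1 \<longrightarrow>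
            regular n m1 n1 \<and> Qstar_equiv (P_rels n n1 m1) (P_rels n m1 n1))
       \<and> (\<forall>r :: int. Qstar_equiv (E_rels n r) (E_rels n (1 - r)))"
proof (intro conjI allI impI)
  fix n1 m1 :: int
  assume "regular n n1 m1"
  then show "regular n m1 n1"
    by (rule regular_swap)
  show "Qstar_equiv (P_rels n n1 m1) (P_rels n m1 n1)"
    by (rule Qstar_equiv_P_rels_swap)
next
  fix r :: int
  show "Qstar_equiv (E_rels n r) (E_rels n (1 - r))"
    using Qstar_equiv_P_rels_flip[of n 2 "1 - r"] by (simp add: E_rels_def)
qed

end
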